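(* Let $\alpha\in(0,1)$, $T>0$, $\mathcal{A}\in\mathbb{C}^{d\times d}$, $x_0\in\mathbb{C}^d$, and $\vartheta(t)=\sum_{n=0}^\infty\vartheta_nt^n$ with $\vartheta_n\in\mathbb{C}^d$ and $\sum_n|\vartheta_n|T^n<\infty$. Then $$x(t)=\mathcal{E}_\alpha(\mathcal{A}t)x_0+\sum_{n=0}^\infty\sum_{k=0}^{n-1}\mathcal{A}^k\frac{\prod_{j=n-k}^n\Gamma(j-\alpha+1)}{\Gamma(2-\alpha)^{k+1}\prod_{j=n-k}^n\Gamma(j+1)}\vartheta_{n-k-1}\,t^n$$ satisfies $x(0)=x_0$ and ${}^LD^\alpha x(t)=\mathcal{A}x(t)+\vartheta(t)$ for every $t\in[0,T]$.
   Context: $\mathcal{E}_\alpha(s)=\sum_{n=0}^\infty\frac{s^n}{\Gamma(2-\alpha)^n\prod_{j=1}^n\frac{\Gamma(j+1)}{\Gamma(j+1-\alpha)}}$ (matrix arguments allowed). Empty sums are $0$. Caputo derivative ${}^CD^\alpha x(t)=\frac{1}{\Gamma(1-\alpha)}\int_0^t (t-\tau)^{-\alpha}x'(\tau)d\tau$; L-fractional derivative ${}^LD^\alpha x(t)=\frac{\Gamma(2-\alpha)}{t^{1-\alpha}}{}^CD^\alpha x(t)$ for $t>0$, extended to $t=0$ by continuity (value $x'(0)$) for $C^2$ functions. *)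

theory Defs
  imports "HOL-Analysis.Analysis"
begin

primrec mpow :: "'a::semiring_1 ^'n ^'n \<Rightarrow> nat \<Rightarrow> 'a ^'n ^'n" where
  "mpow M 0 = mat 1"
| "mpow M (Suc k) = M ** mpow M k"

definition Ecoeff :: "real \<Rightarrow> nat \<Rightarrow> real" where
  "Ecoeff \<alpha> n = 1 / (Gamma (2 - \<alpha>) ^ n * (\<Prod>j=1..n. Gamma (real j + 1) / Gamma (real j + 1 - \<alpha>)))"

definition Emat :: "real \<Rightarrow> complex ^'d ^'d \<Rightarrow> complex ^'d ^'d" where
  "Emat \<alpha> S = (\<Sum>n. Ecoeff \<alpha> n *\<^sub>R mpow S n)"

definition caputo :: "real \<Rightarrow> (real \<Rightarrow> complex ^'d) \<Rightarrow> real \<Rightarrow> complex ^'d" where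
  "caputo \<alpha> x t = (1 / Gamma (1 - \<alpha>)) *\<^sub>R
     integral {0..t} (\<lambda>\<tau>. ((t - \<tau>) powr (- \<alpha>)) *\<^sub>R vector_derivative x (at \<tau> within {0..t}))"

text \<open>L-fractional derivative; at t = 0 it is given the value x'(0) (right derivative).\<close>
definition LD :: "real \<Rightarrow> (real \<Rightarrow> complex ^'d) \<Rightarrow> real \<Rightarrow> complex ^'d" where
  "LD \<alpha> x t = (if t = 0 then vector_derivative x (at 0 within {0..})
               else (Gamma (2 - \<alpha>) / t powr (1 - \<alpha>)) *\<^sub>R caputo \<alpha> x t)"

end

theory Submission
  imports Defs
begin

text \<open>
  Write the solution as a power series \<open>x t = (\<Sum>n. t ^ n *\<^sub>R a n)\<close>. Integrating against the
  Abel kernel \<open>(t - \<tau>) powr (-\<alpha>)\<close> turns \<open>\<tau> ^ n\<close> into a Beta function, so the L-fractional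
  derivative maps \<open>t ^ (n + 1)\<close> to \<open>Lfactor \<alpha> (n + 1) * t ^ n\<close>; termwise integration is justified
  by dominated convergence. The coefficients of the given \<open>x\<close> satisfy \<open>a 0 = x0\<close> and
  \<open>Lfactor \<alpha> (n + 1) *\<^sub>R a (n + 1) = A *v a n + \<theta> n\<close>, which is the equation
  \<open>LD \<alpha> x = A x + \<theta>\<close> read coefficientwise. Because \<open>Lfactor \<alpha> n \<ge> \<alpha> * harm n\<close> tends to infinity,
  the same recursion shows that \<open>(\<Sum>n. norm (a n) * T ^ n)\<close> converges, and the series defining
  \<open>E\<^sub>\<alpha>\<close> converges for every matrix.
\<close>

section \<open>Gamma-function coefficients\<close>

(* LD \<alpha> (\<lambda>s. s ^ (n + 1)) t = Lfactor \<alpha> (n + 1) * t ^ n; see LD_power_series. *)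
definition Lfactor :: "real \<Rightarrow> nat \<Rightarrow> real" where
  "Lfactor \<alpha> n = Gamma (2 - \<alpha>) * Gamma (real n + 1) / Gamma (real n + 1 - \<alpha>)"

lemma Gamma_plus1_real: "0 < (x::real) \<Longrightarrow> Gamma (x + 1) = x * Gamma x"
  by (rule Gamma_plus1) (auto dest: nonpos_Ints_nonpos)

lemma Lfactor_pos: "\<alpha> < 1 \<Longrightarrow> 0 < Lfactor \<alpha> n"
  unfolding Lfactor_def by (intro divide_pos_pos mult_pos_pos Gamma_real_pos) auto

lemma Lfactor_Suc:
  assumes "\<alpha> < 1"
  shows "Lfactor \<alpha> (Suc n) = Lfactor \<alpha> n * (real n + 1) / (real n + 1 - \<alpha>)"
proof -
  have num: "Gamma (real (Suc n) + 1) = (real n + 1) * Gamma (real n + 1)"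
    using Gamma_plus1_real[of "real n + 1"] by (simp add: add_ac)
  have den: "Gamma (real (Suc n) + 1 - \<alpha>) = (real n + 1 - \<alpha>) * Gamma (real n + 1 - \<alpha>)"
    using Gamma_plus1_real[of "real n + 1 - \<alpha>"] assms by (simp add: algebra_simps)
  have "0 < Gamma (real n + 1 - \<alpha>)" "0 < real n + 1 - \<alpha>"
    using assms by (auto intro: Gamma_real_pos)
  then show ?thesis unfolding Lfactor_def num den by (simp add: field_simps)
qed

lemma Lfactor_1:
  assumes "\<alpha> < 1"
  shows "Lfactor \<alpha> 1 = 1"
proof -
  have "0 < Gamma (2 - \<alpha>)" using assms by (intro Gamma_real_pos) auto
  then show ?thesis using Gamma_fact[of 1, where 'a = real]
    by (simp add: Lfactor_def numeral_2_eq_2 add_ac)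
qed

lemma Lfactor_Suc_ge:
  assumes "0 \<le> \<alpha>" "\<alpha> < 1"
  shows "(1 + \<alpha> / (real n + 1)) * Lfactor \<alpha> n \<le> Lfactor \<alpha> (Suc n)"
proof -
  have "1 + \<alpha> / (real n + 1) \<le> (real n + 1) / (real n + 1 - \<alpha>)"
    using assms by (simp add: field_simps)
  from mult_right_mono[OF this less_imp_le[OF Lfactor_pos[OF assms(2)]]] show ?thesis
    using assms by (simp add: Lfactor_Suc[OF assms(2)] mult_ac)
qed

lemma Lfactor_ge_1:
  assumes "0 \<le> \<alpha>" "\<alpha> < 1"
  shows "1 \<le> Lfactor \<alpha> (Suc n)"
proof (induction n)
  case 0
  then show ?case using Lfactor_1 assms by simp
next
  case (Suc n)
  have "Lfactor \<alpha> (Suc n) \<le> (1 + \<alpha> / (real (Suc n) + 1)) * Lfactor \<alpha> (Suc n)"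
    using assms Lfactor_pos[of \<alpha> "Suc n"] by (simp add: algebra_simps)
  with Suc Lfactor_Suc_ge[OF assms, of "Suc n"] show ?case by linarith
qed

lemma Lfactor_ge_harm:
  assumes "0 \<le> \<alpha>" "\<alpha> < 1"
  shows "\<alpha> * harm (Suc n) \<le> Lfactor \<alpha> (Suc n)"
proof (induction n)
  case 0
  then show ?case using Lfactor_1 assms by (simp add: harm_def)
next
  case (Suc n)
  have "\<alpha> / (real (Suc n) + 1) \<le> \<alpha> / (real (Suc n) + 1) * Lfactor \<alpha> (Suc n)"
    using assms Lfactor_ge_1[OF assms, of n] by (simp add: divide_right_mono mult_le_cancel_left1)
  moreover have "harm (Suc (Suc n)) = harm (Suc n) + 1 / (real (Suc n) + 1)"
    by (simp add: harm_Suc inverse_eq_divide add_ac)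
  ultimately show ?case
    using Suc Lfactor_Suc_ge[OF assms, of "Suc n"] by (simp add: algebra_simps)
qed

lemma Lfactor_Suc_at_top:
  assumes "0 < \<alpha>" "\<alpha> < 1"
  shows "filterlim (\<lambda>n. Lfactor \<alpha> (Suc n)) at_top sequentially"
proof -
  have "filterlim (\<lambda>n. \<alpha> * harm (Suc n)) at_top sequentially"
    using assms filterlim_sequentially_Suc harm_at_top
    by (intro filterlim_tendsto_pos_mult_at_top[OF tendsto_const]) auto
  then show ?thesis
    by (rule filterlim_at_top_mono) (use Lfactor_ge_harm assms in auto)
qed

lemma Beta_real_pos: "0 < a \<Longrightarrow> 0 < b \<Longrightarrow> 0 < Beta a (b::real)"
  unfolding Beta_def by (intro divide_pos_pos mult_pos_pos Gamma_real_pos) auto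

lemma Beta_Lfactor:
  assumes "\<alpha> < 1"
  shows "(real n + 1) * Beta (real n + 1) (1 - \<alpha>) = Gamma (1 - \<alpha>) / Gamma (2 - \<alpha>) * Lfactor \<alpha> (Suc n)"
proof -
  have "Gamma (real n + 2) = (real n + 1) * Gamma (real n + 1)"
    using Gamma_plus1_real[of "real n + 1"] by (simp add: add_ac)
  moreover have "0 < Gamma (2 - \<alpha>)" "0 < Gamma (real n + 2 - \<alpha>)"
    using assms by (intro Gamma_real_pos; simp)+
  ultimately show ?thesis
    by (simp add: Beta_def Lfactor_def field_simps)
qed

lemma Ecoeff_0: "Ecoeff \<alpha> 0 = 1"
  by (simp add: Ecoeff_def)

lemma Ecoeff_Suc:
  assumes "\<alpha> < 1"
  shows "Ecoeff \<alpha> (Suc n) = Ecoeff \<alpha> n / Lfactor \<alpha> (Suc n)"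
proof -
  define P where "P n = (\<Prod>j=1..n. Gamma (real j + 1) / Gamma (real j + 1 - \<alpha>))" for n
  have P_Suc: "P (Suc n) = P n * (Gamma (real (Suc n) + 1) / Gamma (real (Suc n) + 1 - \<alpha>))"
    unfolding P_def by (simp add: prod.nat_ivl_Suc' mult.commute)
  have "0 < P n" unfolding P_def using assms
    by (intro prod_pos divide_pos_pos Gamma_real_pos) auto
  moreover have "0 < Gamma (2 - \<alpha>)" "0 < Gamma (real n + 2)" "0 < Gamma (real n + 2 - \<alpha>)"
    using assms by (intro Gamma_real_pos; simp)+
  ultimately show ?thesis
    unfolding Ecoeff_def Lfactor_def P_def[symmetric] P_Suc by (simp add: field_simps add_ac)
qed

lemma Ecoeff_pos: "\<alpha> < 1 \<Longrightarrow> 0 < Ecoeff \<alpha> n"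
  by (induction n) (simp_all add: Ecoeff_0 Ecoeff_Suc Lfactor_pos)

lemma summable_Ecoeff_power:
  assumes "0 < \<alpha>" "\<alpha> < 1"
  shows "summable (\<lambda>n. Ecoeff \<alpha> n * r ^ n)"
proof -
  obtain N where N: "\<And>n. N \<le> n \<Longrightarrow> 2 * \<bar>r\<bar> \<le> Lfactor \<alpha> (Suc n)"
    using Lfactor_Suc_at_top[OF assms] unfolding filterlim_at_top eventually_sequentially by blast
  show ?thesis
  proof (rule summable_ratio_test[where c = "1/2" and N = N])
    fix n assume "N \<le> n"
    have "\<bar>r\<bar> / Lfactor \<alpha> (Suc n) \<le> 1 / 2"
      using N[OF \<open>N \<le> n\<close>] Lfactor_pos[OF assms(2)] by (simp add: field_simps)
    then have "\<bar>Ecoeff \<alpha> n * r ^ n\<bar> * (\<bar>r\<bar> / Lfactor \<alpha> (Suc n)) \<le> \<bar>Ecoeff \<alpha> n * r ^ n\<bar> * (1 / 2)"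
      by (rule mult_left_mono) simp
    then show "norm (Ecoeff \<alpha> (Suc n) * r ^ Suc n) \<le> 1 / 2 * norm (Ecoeff \<alpha> n * r ^ n)"
      using Lfactor_pos[OF assms(2), of "Suc n"]
      by (simp add: Ecoeff_Suc[OF assms(2)] abs_mult mult_ac)
  qed simp
qed

section \<open>Vector-valued power series\<close>

lemma summable_norm_power_scaleR:
  fixes a :: "nat \<Rightarrow> 'a::banach"
  assumes "summable (\<lambda>n. norm (a n) * R ^ n)" "\<bar>t\<bar> \<le> R"
  shows "summable (\<lambda>n. norm (t ^ n *\<^sub>R a n))"
proof (rule summable_comparison_test'[OF assms(1)])
  fix n
  have "norm (a n) * \<bar>t\<bar> ^ n \<le> norm (a n) * R ^ n"
    using assms(2) by (intro mult_left_mono power_mono) auto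
  then show "norm (norm (t ^ n *\<^sub>R a n)) \<le> norm (a n) * R ^ n"
    by (simp add: power_abs mult.commute)
qed

lemma summable_power_scaleR:
  fixes a :: "nat \<Rightarrow> 'a::banach"
  assumes "summable (\<lambda>n. norm (a n) * R ^ n)" "\<bar>t\<bar> \<le> R"
  shows "summable (\<lambda>n. t ^ n *\<^sub>R a n)"
  using summable_norm_power_scaleR[OF assms] by (rule summable_norm_cancel)

lemma power_series_scaleR_0: "(\<Sum>n. (0::real) ^ n *\<^sub>R v n) = (v 0 :: 'a::real_normed_vector)"
  by (subst suminf_finite[where N = "{0}"]) auto

lemma summable_norm_power_derivative:
  fixes a :: "nat \<Rightarrow> 'a::real_normed_vector"
  assumes "summable (\<lambda>n. norm (a n) * R ^ n)" "\<bar>t\<bar> < R"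
  shows "summable (\<lambda>n. \<bar>t\<bar> ^ n * norm (real (Suc n) *\<^sub>R a (Suc n)))"
proof -
  have "summable (\<lambda>n. diffs (\<lambda>n. norm (a n)) n * \<bar>t\<bar> ^ n)"
  proof (rule termdiff_converges[where K = R])
    fix x :: real assume "norm x < R"
    have "norm (norm (a n) * x ^ n) \<le> norm (a n) * R ^ n" for n
      using \<open>norm x < R\<close> by (simp add: abs_mult power_abs mult_left_mono power_mono)
    then show "summable (\<lambda>n. norm (a n) * x ^ n)"
      by (rule summable_comparison_test'[OF assms(1)])
  qed (use assms in simp)
  moreover have "diffs (\<lambda>n. norm (a n)) n * \<bar>t\<bar> ^ n = \<bar>t\<bar> ^ n * norm (real (Suc n) *\<^sub>R a (Suc n))" for n
    by (simp add: diffs_def)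
  ultimately show ?thesis by simp
qed

lemma summable_power_derivative:
  fixes a :: "nat \<Rightarrow> 'a::banach"
  assumes "summable (\<lambda>n. norm (a n) * R ^ n)" "\<bar>t\<bar> < R"
  shows "summable (\<lambda>n. t ^ n *\<^sub>R (real (Suc n) *\<^sub>R a (Suc n)))"
proof (rule summable_norm_cancel, rule summable_comparison_test'[OF summable_norm_power_derivative[OF assms]])
  show "norm (norm (t ^ n *\<^sub>R (real (Suc n) *\<^sub>R a (Suc n))))
          \<le> \<bar>t\<bar> ^ n * norm (real (Suc n) *\<^sub>R a (Suc n))" for n
    by (simp only: norm_scaleR real_norm_def abs_mult abs_abs abs_norm_cancel power_abs order_refl)
qed

lemma power_series_inner_has_field_derivative:
  fixes a :: "nat \<Rightarrow> 'a::euclidean_space"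
  assumes a: "summable (\<lambda>n. norm (a n) * R ^ n)" and i: "i \<in> Basis" and t: "\<bar>t\<bar> < R"
  shows "((\<lambda>s. (\<Sum>n. s ^ n *\<^sub>R a n) \<bullet> i) has_field_derivative
           (\<Sum>n. t ^ n *\<^sub>R (real (Suc n) *\<^sub>R a (Suc n))) \<bullet> i) (at t)"
proof -
  define c where "c n = a n \<bullet> i" for n
  have c: "summable (\<lambda>n. c n * R ^ n)"
  proof (rule summable_comparison_test'[OF a])
    fix n
    have "\<bar>c n\<bar> \<le> norm (a n)" unfolding c_def using Basis_le_norm[OF i] .
    then show "norm (c n * R ^ n) \<le> norm (a n) * R ^ n"
      using t by (simp add: abs_mult mult_right_mono)
  qed
  have "DERIV (\<lambda>s. \<Sum>n. c n * s ^ n) t :> (\<Sum>n. diffs c n * t ^ n)"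
    by (rule termdiffs_strong[OF c]) (use t in simp)
  moreover have "(\<Sum>n. diffs c n * t ^ n) = (\<Sum>n. t ^ n *\<^sub>R (real (Suc n) *\<^sub>R a (Suc n))) \<bullet> i"
    using bounded_linear.suminf[OF bounded_linear_inner_left summable_power_derivative[OF a t], of i]
    by (simp add: diffs_def c_def inner_scaleR_left mult_ac)
  ultimately have "((\<lambda>s. \<Sum>n. c n * s ^ n) has_field_derivative
                     (\<Sum>n. t ^ n *\<^sub>R (real (Suc n) *\<^sub>R a (Suc n))) \<bullet> i) (at t)"
    by simp
  then show ?thesis
  proof (rule has_field_derivative_transform_within_open[where S = "{-R<..<R}"])
    fix s assume "s \<in> {-R<..<R}"
    then have "summable (\<lambda>n. s ^ n *\<^sub>R a n)" by (intro summable_power_scaleR[OF a]) auto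
    then show "(\<Sum>n. c n * s ^ n) = (\<Sum>n. s ^ n *\<^sub>R a n) \<bullet> i"
      using bounded_linear.suminf[OF bounded_linear_inner_left, of "\<lambda>n. s ^ n *\<^sub>R a n" i]
      by (simp add: c_def inner_scaleR_left mult.commute)
  qed (use t in auto)
qed

lemma power_series_has_vector_derivative:
  fixes a :: "nat \<Rightarrow> 'a::euclidean_space"
  assumes a: "summable (\<lambda>n. norm (a n) * R ^ n)"
    and f: "\<And>s. \<bar>s\<bar> < R \<Longrightarrow> f s = (\<Sum>n. s ^ n *\<^sub>R a n)"
    and t: "\<bar>t\<bar> < R"
  shows "(f has_vector_derivative (\<Sum>n. t ^ n *\<^sub>R (real (Suc n) *\<^sub>R a (Suc n)))) (at t)"
proof -
  define D where "D = (\<Sum>n. t ^ n *\<^sub>R (real (Suc n) *\<^sub>R a (Suc n)))"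
  have D_inner: "(\<lambda>h. (h *\<^sub>R D) \<bullet> i) = (*) (D \<bullet> i)" for i
    by (auto simp: inner_scaleR_left)
  have "((\<lambda>s. (\<Sum>n. s ^ n *\<^sub>R a n) \<bullet> i) has_derivative (\<lambda>h. (h *\<^sub>R D) \<bullet> i)) (at t)"
    if "i \<in> Basis" for i
    using power_series_inner_has_field_derivative[OF a that t]
    unfolding D_inner unfolding D_def has_field_derivative_def .
  then have "((\<lambda>s. \<Sum>n. s ^ n *\<^sub>R a n) has_vector_derivative D) (at t)"
    unfolding has_vector_derivative_def by (subst has_derivative_componentwise_within) auto
  then show ?thesis unfolding D_def
    by (rule has_vector_derivative_transform_within_open[where S = "{-R<..<R}"]) (use t f in auto)
qed

section \<open>Integrals against the Abel kernel\<close>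

lemma has_integral_dominated_convergence:
  fixes F :: "nat \<Rightarrow> 'n::euclidean_space \<Rightarrow> 'm::euclidean_space"
  assumes F: "\<And>k. (F k has_integral I k) S" and W: "W integrable_on S"
    and le: "\<And>k x. x \<in> S \<Longrightarrow> norm (F k x) \<le> W x"
    and conv: "\<And>x. x \<in> S \<Longrightarrow> (\<lambda>k. F k x) \<longlonglongrightarrow> h x" and I: "I \<longlonglongrightarrow> J"
  shows "(h has_integral J) S"
proof -
  have "F k integrable_on S" for k using F by blast
  note limit = dominated_convergence[OF this W le conv]
  from limit(2) have "I \<longlonglongrightarrow> integral S h"
    by (simp add: integral_unique[OF F])
  with I have "integral S h = J" by (rule LIMSEQ_unique[rotated])
  with limit(1) show ?thesis by (simp add: has_integral_integrable_integral)
qed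

lemma summable_Abel_kernel_power_series:
  fixes c :: "nat \<Rightarrow> real"
  assumes "\<And>\<tau>. 0 \<le> \<tau> \<Longrightarrow> \<tau> < t \<Longrightarrow> summable (\<lambda>n. \<tau> ^ n * c n)" "\<tau> \<in> {0..t}"
  shows "summable (\<lambda>n. (t - \<tau>) powr (-\<alpha>) * \<tau> ^ n * c n)"
proof (cases "\<tau> = t")
  case False
  with assms have "summable (\<lambda>n. (t - \<tau>) powr (-\<alpha>) * (\<tau> ^ n * c n))"
    by (intro summable_mult assms(1)) auto
  then show ?thesis by (simp add: mult_ac)
qed simp

lemma has_integral_Abel_kernel_power:
  assumes "\<alpha> < 1" "0 < t"
  shows "((\<lambda>\<tau>. (t - \<tau>) powr (-\<alpha>) * \<tau> ^ n) has_integral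
           t powr (real n + 1 - \<alpha>) * Beta (real n + 1) (1 - \<alpha>)) {0..t}"
proof -
  define B where "B = Beta (real n + 1) (1 - \<alpha>)"
  define f where "f s = s ^ n * (1 - s) powr (-\<alpha>)" for s :: real
  have "((\<lambda>s. s powr (real n + 1 - 1) * (1 - s) powr (1 - \<alpha> - 1)) has_integral B) {0..1}"
    unfolding B_def by (rule has_integral_Beta_real) (use assms in auto)
  then have "(f has_integral B) (cbox 0 1)"
    unfolding cbox_interval
    by (rule has_integral_spike_finite[where S = "{0}", rotated 2]) (auto simp: f_def powr_realpow)
  from has_integral_affinity[OF this, of "1/t" 0]
  have "((\<lambda>x. f (x / t)) has_integral (t * B))
          ((\<lambda>x. (1 / (1/t)) *\<^sub>R x + - ((1 / (1/t)) *\<^sub>R 0)) ` cbox 0 1)"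
    using assms by (simp add: divide_inverse mult.commute)
  moreover have "(\<lambda>x. (1 / (1/t)) *\<^sub>R x + - ((1 / (1/t)) *\<^sub>R 0)) ` cbox 0 1 = {0..t}"
    using assms by (simp add: cbox_interval image_mult_atLeastAtMost)
  ultimately have "((\<lambda>x. f (x / t)) has_integral (t * B)) {0..t}" by simp
  from has_integral_mult_left[OF this, of "t ^ n * t powr (-\<alpha>)"]
  have scaled: "((\<lambda>x. f (x / t) * (t ^ n * t powr (-\<alpha>))) has_integral
                  t * B * (t ^ n * t powr (-\<alpha>))) {0..t}" .
  have scaled_value: "t * B * (t ^ n * t powr (-\<alpha>)) = t powr (real n + 1 - \<alpha>) * B"
    using assms by (simp add: powr_add powr_realpow[symmetric] powr_diff powr_minus field_simps)
  have integrand: "f (x / t) * (t ^ n * t powr (-\<alpha>)) = (t - x) powr (-\<alpha>) * x ^ n"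
    if "x \<in> {0..t}" for x
  proof -
    have "(1 - x / t) * t = t - x" using assms by (simp add: field_simps)
    then have "(1 - x / t) powr (-\<alpha>) * t powr (-\<alpha>) = (t - x) powr (-\<alpha>)"
      using that assms by (simp add: powr_mult[symmetric])
    moreover have "(x / t) ^ n * t ^ n = x ^ n" using assms by (simp add: power_divide)
    moreover have "f (x / t) * (t ^ n * t powr (-\<alpha>))
                     = ((x / t) ^ n * t ^ n) * ((1 - x / t) powr (-\<alpha>) * t powr (-\<alpha>))"
      by (simp add: f_def mult_ac)
    ultimately show ?thesis by (simp add: mult.commute)
  qed
  have "((\<lambda>x. (t - x) powr (-\<alpha>) * x ^ n) has_integral t powr (real n + 1 - \<alpha>) * B) {0..t}"
    unfolding scaled_value[symmetric] by (rule has_integral_eq[OF _ scaled]) (rule integrand)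
  then show ?thesis unfolding B_def .
qed

lemma integrable_Abel_kernel_power_series:
  fixes c :: "nat \<Rightarrow> real"
  assumes \<alpha>: "\<alpha> < 1" and t: "0 < t" and c: "\<And>n. 0 \<le> c n"
    and c_summable: "\<And>\<tau>. 0 \<le> \<tau> \<Longrightarrow> \<tau> < t \<Longrightarrow> summable (\<lambda>n. \<tau> ^ n * c n)"
    and Beta_summable: "summable (\<lambda>n. t powr (real n + 1 - \<alpha>) * Beta (real n + 1) (1 - \<alpha>) * c n)"
  shows "(\<lambda>\<tau>. \<Sum>n. (t - \<tau>) powr (-\<alpha>) * \<tau> ^ n * c n) integrable_on {0..t}"
proof -
  define w where "w n \<tau> = (t - \<tau>) powr (-\<alpha>) * \<tau> ^ n * c n" for n \<tau>
  have w_nonneg: "0 \<le> w n \<tau>" if "\<tau> \<in> {0..t}" for n \<tau>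
    unfolding w_def using that c by auto
  have w_summable: "summable (\<lambda>n. w n \<tau>)" if "\<tau> \<in> {0..t}" for \<tau>
    unfolding w_def by (rule summable_Abel_kernel_power_series[OF c_summable that])
  have partial_integral:
    "((\<lambda>\<tau>. \<Sum>n<k. w n \<tau>) has_integral
       (\<Sum>n<k. t powr (real n + 1 - \<alpha>) * Beta (real n + 1) (1 - \<alpha>) * c n)) {0..t}" for k
    unfolding w_def by (intro has_integral_sum has_integral_mult_left has_integral_Abel_kernel_power \<alpha> t) auto
  have "(\<lambda>\<tau>. \<Sum>n. w n \<tau>) integrable_on {0..t}"
  proof (rule monotone_convergence_increasing[THEN conjunct1])
    show "(\<lambda>\<tau>. \<Sum>n<k. w n \<tau>) integrable_on {0..t}" for k
      using partial_integral by blast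
    show "(\<Sum>n<k. w n \<tau>) \<le> (\<Sum>n<Suc k. w n \<tau>)" if "\<tau> \<in> {0..t}" for k \<tau>
      using w_nonneg[OF that, of k] by simp
    show "(\<lambda>k. \<Sum>n<k. w n \<tau>) \<longlonglongrightarrow> (\<Sum>n. w n \<tau>)" if "\<tau> \<in> {0..t}" for \<tau>
      using summable_LIMSEQ[OF w_summable[OF that]] .
    have "\<bar>integral {0..t} (\<lambda>\<tau>. \<Sum>n<k. w n \<tau>)\<bar>
          \<le> (\<Sum>n. t powr (real n + 1 - \<alpha>) * Beta (real n + 1) (1 - \<alpha>) * c n)" for k
    proof -
      have "0 \<le> t powr (real n + 1 - \<alpha>) * Beta (real n + 1) (1 - \<alpha>) * c n" for n
        using \<alpha> c Beta_real_pos[of "real n + 1" "1 - \<alpha>"] by simp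
      then show ?thesis
        by (simp add: integral_unique[OF partial_integral] abs_of_nonneg sum_nonneg
            sum_le_suminf[OF Beta_summable])
    qed
    then show "bounded (range (\<lambda>k. integral {0..t} (\<lambda>\<tau>. \<Sum>n<k. w n \<tau>)))"
      unfolding bounded_real by blast
  qed
  then show ?thesis unfolding w_def .
qed

lemma has_integral_Abel_kernel_power_series:
  fixes v :: "nat \<Rightarrow> 'a::euclidean_space"
  assumes \<alpha>: "\<alpha> < 1" and t: "0 < t"
    and v_summable: "\<And>\<tau>. 0 \<le> \<tau> \<Longrightarrow> \<tau> < t \<Longrightarrow> summable (\<lambda>n. \<tau> ^ n * norm (v n))"
    and Beta_summable: "summable (\<lambda>n. t powr (real n + 1 - \<alpha>) * Beta (real n + 1) (1 - \<alpha>) * norm (v n))"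
  shows "((\<lambda>\<tau>. (t - \<tau>) powr (-\<alpha>) *\<^sub>R (\<Sum>n. \<tau> ^ n *\<^sub>R v n)) has_integral
           (\<Sum>n. (t powr (real n + 1 - \<alpha>) * Beta (real n + 1) (1 - \<alpha>)) *\<^sub>R v n)) {0..t}"
proof -
  define \<beta> where "\<beta> n = t powr (real n + 1 - \<alpha>) * Beta (real n + 1) (1 - \<alpha>)" for n
  define h where "h \<tau> = (t - \<tau>) powr (-\<alpha>) *\<^sub>R (\<Sum>n. \<tau> ^ n *\<^sub>R v n)" for \<tau>
  define F where "F k \<tau> = (\<Sum>n<k. ((t - \<tau>) powr (-\<alpha>) * \<tau> ^ n) *\<^sub>R v n)" for k \<tau>
  define W where "W \<tau> = (\<Sum>n. (t - \<tau>) powr (-\<alpha>) * \<tau> ^ n * norm (v n))" for \<tau>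
  have F_integral: "(F k has_integral (\<Sum>n<k. \<beta> n *\<^sub>R v n)) {0..t}" for k
    unfolding F_def \<beta>_def
    by (intro has_integral_sum has_integral_scaleR_left has_integral_Abel_kernel_power \<alpha> t) auto
  have W_integrable: "W integrable_on {0..t}"
    unfolding W_def using \<alpha> t v_summable Beta_summable
    by (intro integrable_Abel_kernel_power_series) auto
  have F_le_W: "norm (F k \<tau>) \<le> W \<tau>" if "\<tau> \<in> {0..t}" for k \<tau>
  proof -
    have summable: "summable (\<lambda>n. (t - \<tau>) powr (-\<alpha>) * \<tau> ^ n * norm (v n))"
      by (rule summable_Abel_kernel_power_series[OF v_summable that])
    have "norm (F k \<tau>) \<le> (\<Sum>n<k. norm (((t - \<tau>) powr (-\<alpha>) * \<tau> ^ n) *\<^sub>R v n))"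
      unfolding F_def by (rule norm_sum)
    also have "\<dots> = (\<Sum>n<k. (t - \<tau>) powr (-\<alpha>) * \<tau> ^ n * norm (v n))"
      using that by (intro sum.cong) (auto simp: abs_mult)
    also have "\<dots> \<le> W \<tau>"
      unfolding W_def using that by (intro sum_le_suminf[OF summable]) auto
    finally show ?thesis .
  qed
  have F_to_h: "(\<lambda>k. F k \<tau>) \<longlonglongrightarrow> h \<tau>" if "\<tau> \<in> {0..t}" for \<tau>
  proof (cases "\<tau> = t")
    case False
    with that have "summable (\<lambda>n. norm (v n) * \<tau> ^ n)"
      using v_summable[of \<tau>] by (simp add: mult.commute)
    with that have "summable (\<lambda>n. \<tau> ^ n *\<^sub>R v n)"
      by (intro summable_power_scaleR[where R = \<tau>]) auto
    then have "(\<lambda>n. (t - \<tau>) powr (-\<alpha>) *\<^sub>R (\<tau> ^ n *\<^sub>R v n)) sums h \<tau>"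
      unfolding h_def by (intro sums_scaleR_right summable_sums)
    then show ?thesis unfolding F_def sums_def by simp
  qed (simp add: F_def h_def)
  have "summable (\<lambda>n. \<beta> n *\<^sub>R v n)"
  proof (rule summable_norm_cancel, rule summable_comparison_test'[OF Beta_summable])
    fix n
    have "0 \<le> \<beta> n"
      unfolding \<beta>_def using \<alpha> Beta_real_pos[of "real n + 1" "1 - \<alpha>"] by simp
    then show "norm (norm (\<beta> n *\<^sub>R v n)) \<le> t powr (real n + 1 - \<alpha>) * Beta (real n + 1) (1 - \<alpha>) * norm (v n)"
      by (simp add: \<beta>_def)
  qed
  from has_integral_dominated_convergence[OF F_integral W_integrable F_le_W F_to_h summable_LIMSEQ[OF this]]
  show ?thesis unfolding h_def \<beta>_def .
qed

lemma Abel_kernel_power_coeff: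
  assumes "\<alpha> < 1" "0 < t"
  shows "t powr (real n + 1 - \<alpha>) * Beta (real n + 1) (1 - \<alpha>) * real (Suc n)
           = t powr (1 - \<alpha>) * Gamma (1 - \<alpha>) / Gamma (2 - \<alpha>) * (t ^ n * Lfactor \<alpha> (Suc n))"
proof -
  have "t powr (real n + 1 - \<alpha>) = t powr (real n) * t powr (1 - \<alpha>)"
    unfolding powr_add[symmetric] by (simp add: algebra_simps)
  then have "t powr (real n + 1 - \<alpha>) = t ^ n * t powr (1 - \<alpha>)"
    using assms by (simp add: powr_realpow)
  then have "t powr (real n + 1 - \<alpha>) * Beta (real n + 1) (1 - \<alpha>) * real (Suc n)
               = t ^ n * t powr (1 - \<alpha>) * ((real n + 1) * Beta (real n + 1) (1 - \<alpha>))"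
    by (simp add: mult_ac)
  then show ?thesis by (simp add: Beta_Lfactor[OF assms(1)] mult_ac)
qed

section \<open>Fractional derivatives of power series\<close>

lemma summable_norm_power_of_Lfactor:
  fixes a :: "nat \<Rightarrow> 'a::real_normed_vector"
  assumes "0 \<le> \<alpha>" "\<alpha> < 1" "0 \<le> T"
    and "summable (\<lambda>n. Lfactor \<alpha> (Suc n) * norm (a (Suc n)) * T ^ n)"
  shows "summable (\<lambda>n. norm (a n) * T ^ n)"
proof -
  have "summable (\<lambda>n. norm (a (Suc n)) * T ^ Suc n)"
  proof (rule summable_comparison_test'[OF summable_mult[OF assms(4), of T]])
    fix n
    have "norm (a (Suc n)) * T ^ Suc n * 1 \<le> norm (a (Suc n)) * T ^ Suc n * Lfactor \<alpha> (Suc n)"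
      using assms Lfactor_ge_1[OF assms(1,2), of n] by (intro mult_left_mono) auto
    then show "norm (norm (a (Suc n)) * T ^ Suc n) \<le> T * (Lfactor \<alpha> (Suc n) * norm (a (Suc n)) * T ^ n)"
      using assms(3) by (simp add: mult_ac)
  qed
  then show ?thesis by (subst summable_Suc_iff[symmetric])
qed

lemma caputo_eq_integral_power_series:
  fixes a :: "nat \<Rightarrow> complex ^'d" and f :: "real \<Rightarrow> complex ^'d"
  assumes a: "summable (\<lambda>n. norm (a n) * T ^ n)"
    and f: "\<And>s. \<bar>s\<bar> < T \<Longrightarrow> f s = (\<Sum>n. s ^ n *\<^sub>R a n)" and t: "0 < t" "t \<le> T"
  shows "caputo \<alpha> f t = (1 / Gamma (1 - \<alpha>)) *\<^sub>R
           integral {0..t} (\<lambda>\<tau>. (t - \<tau>) powr (-\<alpha>) *\<^sub>R (\<Sum>n. \<tau> ^ n *\<^sub>R (real (Suc n) *\<^sub>R a (Suc n))))"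
proof -
  have integrand: "(t - \<tau>) powr (-\<alpha>) *\<^sub>R vector_derivative f (at \<tau> within {0..t})
          = (t - \<tau>) powr (-\<alpha>) *\<^sub>R (\<Sum>n. \<tau> ^ n *\<^sub>R (real (Suc n) *\<^sub>R a (Suc n)))"
    if "\<tau> \<in> {0..t}" for \<tau>
  proof (cases "\<tau> = t")
    case False
    with that t have "\<bar>\<tau>\<bar> < T" by auto
    from power_series_has_vector_derivative[OF a f this]
    have "vector_derivative f (at \<tau> within {0..t}) = (\<Sum>n. \<tau> ^ n *\<^sub>R (real (Suc n) *\<^sub>R a (Suc n)))"
      by (rule vector_derivative_at_within_ivl) (use that t False in auto)
    then show ?thesis by simp
  qed simp \<comment> \<open>at \<open>\<tau> = t\<close> both sides vanish since \<open>0 powr (-\<alpha>) = 0\<close>\<close>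
  have "integral {0..t} (\<lambda>\<tau>. (t - \<tau>) powr (-\<alpha>) *\<^sub>R vector_derivative f (at \<tau> within {0..t}))
        = integral {0..t} (\<lambda>\<tau>. (t - \<tau>) powr (-\<alpha>) *\<^sub>R (\<Sum>n. \<tau> ^ n *\<^sub>R (real (Suc n) *\<^sub>R a (Suc n))))"
    by (rule integral_cong) (rule integrand)
  then show ?thesis unfolding caputo_def by simp
qed

lemma caputo_power_series:
  fixes a :: "nat \<Rightarrow> complex ^'d" and f :: "real \<Rightarrow> complex ^'d"
  assumes \<alpha>: "0 < \<alpha>" "\<alpha> < 1" and t: "0 < t" "t \<le> T"
    and L_summable: "summable (\<lambda>n. Lfactor \<alpha> (Suc n) * norm (a (Suc n)) * T ^ n)"
    and f: "\<And>s. \<bar>s\<bar> < T \<Longrightarrow> f s = (\<Sum>n. s ^ n *\<^sub>R a n)"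
  shows "caputo \<alpha> f t
           = (t powr (1 - \<alpha>) / Gamma (2 - \<alpha>)) *\<^sub>R (\<Sum>n. t ^ n *\<^sub>R (Lfactor \<alpha> (Suc n) *\<^sub>R a (Suc n)))"
proof -
  define v where "v n = real (Suc n) *\<^sub>R a (Suc n)" for n
  define c where "c = t powr (1 - \<alpha>) * Gamma (1 - \<alpha>) / Gamma (2 - \<alpha>)"
  define S where "S = (\<Sum>n. t ^ n *\<^sub>R (Lfactor \<alpha> (Suc n) *\<^sub>R a (Suc n)))"
  have a_summable: "summable (\<lambda>n. norm (a n) * T ^ n)"
    using \<alpha> t L_summable by (intro summable_norm_power_of_Lfactor) auto
  have coeff: "t powr (real n + 1 - \<alpha>) * Beta (real n + 1) (1 - \<alpha>) * real (Suc n)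
                 = c * (t ^ n * Lfactor \<alpha> (Suc n))" for n
    unfolding c_def by (rule Abel_kernel_power_coeff[OF \<alpha>(2) t(1)])
  have b_summable: "summable (\<lambda>n. norm (Lfactor \<alpha> (Suc n) *\<^sub>R a (Suc n)) * T ^ n)"
    using L_summable Lfactor_pos[OF \<alpha>(2)] by (simp add: abs_of_pos)
  have "((\<lambda>\<tau>. (t - \<tau>) powr (-\<alpha>) *\<^sub>R (\<Sum>n. \<tau> ^ n *\<^sub>R v n)) has_integral
          (\<Sum>n. (t powr (real n + 1 - \<alpha>) * Beta (real n + 1) (1 - \<alpha>)) *\<^sub>R v n)) {0..t}"
  proof (rule has_integral_Abel_kernel_power_series[OF \<alpha>(2) t(1)])
    fix \<tau> :: real assume "0 \<le> \<tau>" "\<tau> < t"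
    with summable_norm_power_derivative[OF a_summable, of \<tau>] t
    show "summable (\<lambda>n. \<tau> ^ n * norm (v n))" by (simp add: v_def)
  next
    have "summable (\<lambda>n. c * (Lfactor \<alpha> (Suc n) * norm (a (Suc n)) * t ^ n))"
      using summable_norm_power_scaleR[OF b_summable, of t] t Lfactor_pos[OF \<alpha>(2)]
      by (intro summable_mult) (simp add: abs_mult abs_of_pos mult_ac)
    then show "summable (\<lambda>n. t powr (real n + 1 - \<alpha>) * Beta (real n + 1) (1 - \<alpha>) * norm (v n))"
      by (simp add: v_def mult.assoc[symmetric] coeff del: of_nat_Suc) (simp add: mult_ac)
  qed
  moreover have "(\<Sum>n. (t powr (real n + 1 - \<alpha>) * Beta (real n + 1) (1 - \<alpha>)) *\<^sub>R v n) = c *\<^sub>R S"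
  proof -
    have "summable (\<lambda>n. t ^ n *\<^sub>R (Lfactor \<alpha> (Suc n) *\<^sub>R a (Suc n)))"
      using t by (intro summable_power_scaleR[OF b_summable]) simp
    then have "c *\<^sub>R S = (\<Sum>n. c *\<^sub>R (t ^ n *\<^sub>R (Lfactor \<alpha> (Suc n) *\<^sub>R a (Suc n))))"
      unfolding S_def by (rule suminf_scaleR_right)
    then show ?thesis unfolding v_def scaleR_scaleR coeff by simp
  qed
  ultimately have "integral {0..t} (\<lambda>\<tau>. (t - \<tau>) powr (-\<alpha>) *\<^sub>R (\<Sum>n. \<tau> ^ n *\<^sub>R v n)) = c *\<^sub>R S"
    by (simp add: integral_unique)
  then have "caputo \<alpha> f t = (1 / Gamma (1 - \<alpha>) * c) *\<^sub>R S"
    using caputo_eq_integral_power_series[OF a_summable f t, of \<alpha>] by (simp add: v_def)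
  moreover have "0 < Gamma (1 - \<alpha>)" using \<alpha> by (intro Gamma_real_pos) simp
  ultimately show ?thesis unfolding S_def c_def by simp
qed

lemma LD_power_series:
  fixes a :: "nat \<Rightarrow> complex ^'d" and f :: "real \<Rightarrow> complex ^'d"
  assumes \<alpha>: "0 < \<alpha>" "\<alpha> < 1" and t: "t \<in> {0..T}" and T: "0 < T"
    and L_summable: "summable (\<lambda>n. Lfactor \<alpha> (Suc n) * norm (a (Suc n)) * T ^ n)"
    and f: "\<And>s. \<bar>s\<bar> < T \<Longrightarrow> f s = (\<Sum>n. s ^ n *\<^sub>R a n)"
  shows "LD \<alpha> f t = (\<Sum>n. t ^ n *\<^sub>R (Lfactor \<alpha> (Suc n) *\<^sub>R a (Suc n)))"
proof (cases "t = 0")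
  case True
  have a_summable: "summable (\<lambda>n. norm (a n) * T ^ n)"
    using \<alpha> T L_summable by (intro summable_norm_power_of_Lfactor) auto
  have "\<bar>0::real\<bar> < T" using T by simp
  from power_series_has_vector_derivative[OF a_summable f this]
  have "(f has_vector_derivative (\<Sum>n. 0 ^ n *\<^sub>R (real (Suc n) *\<^sub>R a (Suc n)))) (at 0)" .
  then have "(f has_vector_derivative a 1) (at 0)"
    unfolding power_series_scaleR_0 by simp
  then have "(f has_vector_derivative a 1) (at 0 within {0..})"
    by (rule has_vector_derivative_at_within)
  moreover have "at (0::real) within {0..} \<noteq> bot"
  proof -
    have "{(0::real)..} - {0} = {0<..}" by auto
    then show ?thesis by (simp add: at_within_eq_bot_iff)
  qed
  ultimately have "vector_derivative f (at 0 within {0..}) = a 1"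
    by (rule vector_derivative_within[rotated])
  then show ?thesis
    unfolding True power_series_scaleR_0 using Lfactor_1[OF \<alpha>(2)] by (simp add: LD_def)
next
  case False
  with t have "0 < t" "t \<le> T" by auto
  moreover have "0 < t powr (1 - \<alpha>)" "0 < Gamma (2 - \<alpha>)"
    using \<alpha> \<open>0 < t\<close> by (auto intro: Gamma_real_pos)
  ultimately show ?thesis
    using False by (simp add: LD_def caputo_power_series[OF \<alpha> _ _ L_summable f])
qed

section \<open>Matrix powers and the matrix function \<open>Emat\<close>\<close>

lemma matrix_vector_mult_scaleR_right:
  "(A::'a::real_algebra_1^'n^'m) *v (c *\<^sub>R v) = c *\<^sub>R (A *v v)"
  by (simp add: vec_eq_iff matrix_vector_mult_def scaleR_sum_right)

lemma scaleR_matrix_vector_mult: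
  "(c *\<^sub>R (A::'a::real_algebra_1^'n^'m)) *v v = c *\<^sub>R (A *v v)"
  by (simp add: vec_eq_iff matrix_vector_mult_def scaleR_sum_right)

lemma matrix_vector_mult_sum_right:
  "(A::complex^'n^'m) *v (\<Sum>k\<in>S. f k) = (\<Sum>k\<in>S. A *v f k)"
  by (rule linear_sum[OF bounded_linear.linear[OF matrix_vector_mul_bounded_linear]])

lemma mpow_Suc_mult_vector: "mpow A (Suc n) *v v = A *v (mpow A n *v v)"
  by (simp add: matrix_vector_mul_assoc)

lemma mpow_scaleR: "mpow (c *\<^sub>R (A::'a::real_algebra_1^'n^'n)) n = c ^ n *\<^sub>R mpow A n"
  by (induction n) (simp_all add: scalar_matrix_assoc[symmetric] matrix_scalar_ac)

lemma bounded_linear_mult_vector_left: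
  "bounded_linear (\<lambda>M::'a::{real_normed_algebra_1,euclidean_space}^'n^'m. M *v v)"
  unfolding linear_conv_bounded_linear[symmetric]
  by (rule linearI) (simp_all add: matrix_vector_mult_add_rdistrib scaleR_matrix_vector_mult)

lemma norm_axis: "norm (axis j (x::'a::real_normed_vector)) = norm x"
proof -
  have "(\<Sum>i\<in>UNIV. (norm (axis j x $ i))\<^sup>2) = (norm x)\<^sup>2"
    by (simp add: axis_def if_distrib if_distribR cong: if_cong)
  then show ?thesis by (simp add: norm_vec_def L2_set_def)
qed

lemma norm_matrix_le_operator_bound:
  fixes M :: "complex^'n^'m"
  assumes "\<And>v. norm (M *v v) \<le> K * norm v"
  shows "norm M \<le> real CARD('m) * real CARD('n) * K"
proof -
  have entry: "norm (M $ i $ j) \<le> K" for i j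
  proof -
    have "(M *v axis j 1) $ i = M $ i $ j"
      by (simp add: matrix_vector_mult_def axis_def if_distrib cong: if_cong)
    then have "norm (M $ i $ j) \<le> norm (M *v axis j 1)"
      using Finite_Cartesian_Product.norm_nth_le[of "M *v axis j 1" i] by simp
    also have "\<dots> \<le> K" using assms[of "axis j 1"] by (simp add: norm_axis)
    finally show ?thesis .
  qed
  have "norm M \<le> (\<Sum>i\<in>UNIV. norm (M $ i))"
    unfolding norm_vec_def by (rule L2_set_le_sum) simp
  also have "\<dots> \<le> (\<Sum>i\<in>UNIV. \<Sum>j\<in>UNIV. norm (M $ i $ j))"
    unfolding norm_vec_def by (intro sum_mono L2_set_le_sum) simp
  also have "\<dots> \<le> (\<Sum>i\<in>(UNIV::'m set). \<Sum>j\<in>(UNIV::'n set). K)"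
    by (intro sum_mono entry)
  finally show ?thesis by simp
qed

lemma norm_mpow_mult_vector_le:
  fixes A :: "complex^'n^'n"
  assumes "\<And>v. norm (A *v v) \<le> K * norm v" "0 \<le> K"
  shows "norm (mpow A n *v v) \<le> K ^ n * norm v"
proof (induction n)
  case (Suc n)
  have "norm (mpow A (Suc n) *v v) \<le> K * norm (mpow A n *v v)"
    unfolding mpow_Suc_mult_vector by (rule assms(1))
  also have "\<dots> \<le> K * (K ^ n * norm v)"
    using Suc assms(2) by (rule mult_left_mono)
  finally show ?case by (simp add: mult_ac)
qed simp

lemma summable_Emat_series:
  fixes M :: "complex^'d^'d"
  assumes "0 < \<alpha>" "\<alpha> < 1"
  shows "summable (\<lambda>n. Ecoeff \<alpha> n *\<^sub>R mpow M n)"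
proof -
  obtain K where K: "\<And>v. norm (M *v v) \<le> norm v * K" "0 < K"
    using bounded_linear.pos_bounded[OF matrix_vector_mul_bounded_linear[of M]] by blast
  define C where "C = real CARD('d) * real CARD('d)"
  show ?thesis
  proof (rule summable_comparison_test'[OF summable_mult[OF summable_Ecoeff_power[OF assms, of K], of C]])
    fix n
    have "norm (mpow M n) \<le> C * K ^ n"
      unfolding C_def using K by (intro norm_matrix_le_operator_bound norm_mpow_mult_vector_le) (auto simp: mult.commute)
    then show "norm (Ecoeff \<alpha> n *\<^sub>R mpow M n) \<le> C * (Ecoeff \<alpha> n * K ^ n)"
      using Ecoeff_pos[OF assms(2), of n] by (simp add: mult_left_mono mult_ac)
  qed
qed

lemma Emat_scaleR_mult_vector_sums:
  fixes A :: "complex^'d^'d"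
  assumes "0 < \<alpha>" "\<alpha> < 1"
  shows "(\<lambda>n. t ^ n *\<^sub>R (Ecoeff \<alpha> n *\<^sub>R (mpow A n *v x0))) sums (Emat \<alpha> (t *\<^sub>R A) *v x0)"
proof -
  have "(\<lambda>n. Ecoeff \<alpha> n *\<^sub>R mpow (t *\<^sub>R A) n) sums Emat \<alpha> (t *\<^sub>R A)"
    unfolding Emat_def by (rule summable_sums[OF summable_Emat_series[OF assms]])
  from bounded_linear.sums[OF bounded_linear_mult_vector_left this, of x0]
  show ?thesis by (simp add: mpow_scaleR scaleR_matrix_vector_mult mult.commute)
qed

section \<open>The coefficients of the solution\<close>

definition forcing_coeff :: "real \<Rightarrow> nat \<Rightarrow> nat \<Rightarrow> real" where
  "forcing_coeff \<alpha> n k = (\<Prod>j=n-k..n. Gamma (real j - \<alpha> + 1))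
                          / (Gamma (2 - \<alpha>) ^ (k + 1) * (\<Prod>j=n-k..n. Gamma (real j + 1)))"

lemma forcing_coeff_Suc_0: "forcing_coeff \<alpha> (Suc n) 0 = 1 / Lfactor \<alpha> (Suc n)"
  unfolding forcing_coeff_def Lfactor_def by (simp add: algebra_simps)

lemma forcing_coeff_Suc_Suc:
  assumes "\<alpha> < 1"
  shows "forcing_coeff \<alpha> (Suc n) (Suc k) = forcing_coeff \<alpha> n k / Lfactor \<alpha> (Suc n)"
proof -
  define P where "P = (\<Prod>j=n-k..n. Gamma (real j - \<alpha> + 1))"
  define Q where "Q = (\<Prod>j=n-k..n. Gamma (real j + 1))"
  have "{Suc n - Suc k..Suc n} = {n-k..Suc n}" by simp
  moreover have "(\<Prod>j=n-k..Suc n. Gamma (real j - \<alpha> + 1)) = P * Gamma (real (Suc n) - \<alpha> + 1)"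
    unfolding P_def by (subst prod.nat_ivl_Suc') (auto simp: mult.commute)
  moreover have "(\<Prod>j=n-k..Suc n. Gamma (real j + 1)) = Q * Gamma (real (Suc n) + 1)"
    unfolding Q_def by (subst prod.nat_ivl_Suc') (auto simp: mult.commute)
  moreover have "0 < Gamma (2 - \<alpha>)" "0 < Q" "0 < Gamma (real (Suc n) - \<alpha> + 1)"
    "0 < Gamma (real (Suc n) + 1)"
    using assms unfolding Q_def by (auto intro!: Gamma_real_pos prod_pos)
  ultimately show ?thesis
    unfolding forcing_coeff_def Lfactor_def P_def[symmetric] Q_def[symmetric]
    by (simp add: field_simps algebra_simps)
qed

definition solution_coeff ::
    "real \<Rightarrow> complex^'d^'d \<Rightarrow> complex^'d \<Rightarrow> (nat \<Rightarrow> complex^'d) \<Rightarrow> nat \<Rightarrow> complex^'d" where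
  "solution_coeff \<alpha> A x0 \<theta> n = Ecoeff \<alpha> n *\<^sub>R (mpow A n *v x0)
     + (\<Sum>k<n. forcing_coeff \<alpha> n k *\<^sub>R (mpow A k *v \<theta> (n - k - 1)))"

lemma solution_coeff_0: "solution_coeff \<alpha> A x0 \<theta> 0 = x0"
  by (simp add: solution_coeff_def Ecoeff_0)

lemma solution_coeff_Suc:
  assumes "\<alpha> < 1"
  shows "solution_coeff \<alpha> A x0 \<theta> (Suc n)
           = (1 / Lfactor \<alpha> (Suc n)) *\<^sub>R (A *v solution_coeff \<alpha> A x0 \<theta> n + \<theta> n)"
proof -
  have "(\<Sum>k<Suc n. forcing_coeff \<alpha> (Suc n) k *\<^sub>R (mpow A k *v \<theta> (Suc n - k - 1)))
        = forcing_coeff \<alpha> (Suc n) 0 *\<^sub>R \<theta> n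
          + (\<Sum>k<n. forcing_coeff \<alpha> (Suc n) (Suc k) *\<^sub>R (mpow A (Suc k) *v \<theta> (n - k - 1)))"
    by (subst sum.lessThan_Suc_shift) simp
  also have "\<dots> = (1 / Lfactor \<alpha> (Suc n)) *\<^sub>R
      (\<theta> n + A *v (\<Sum>k<n. forcing_coeff \<alpha> n k *\<^sub>R (mpow A k *v \<theta> (n - k - 1))))"
    by (simp add: forcing_coeff_Suc_0 forcing_coeff_Suc_Suc[OF assms] matrix_vector_mul_assoc
        matrix_vector_mult_scaleR_right scaleR_add_right scaleR_sum_right matrix_vector_mult_sum_right
        divide_inverse mult.commute)
  finally have forcing: "(\<Sum>k<Suc n. forcing_coeff \<alpha> (Suc n) k *\<^sub>R (mpow A k *v \<theta> (Suc n - k - 1)))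
      = (1 / Lfactor \<alpha> (Suc n)) *\<^sub>R
          (\<theta> n + A *v (\<Sum>k<n. forcing_coeff \<alpha> n k *\<^sub>R (mpow A k *v \<theta> (n - k - 1))))" .
  have homogeneous: "Ecoeff \<alpha> (Suc n) *\<^sub>R (mpow A (Suc n) *v x0)
      = (1 / Lfactor \<alpha> (Suc n)) *\<^sub>R (A *v (Ecoeff \<alpha> n *\<^sub>R (mpow A n *v x0)))"
    by (simp add: Ecoeff_Suc[OF assms] matrix_vector_mul_assoc matrix_vector_mult_scaleR_right
        divide_inverse mult.commute)
  show ?thesis
    unfolding solution_coeff_def forcing homogeneous
    by (simp add: matrix_vector_right_distrib scaleR_add_right algebra_simps)
qed

lemma summable_halving_recursion:
  fixes u w :: "nat \<Rightarrow> real"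
  assumes u_nonneg: "\<And>n. 0 \<le> u n"
    and rec: "\<And>n. N \<le> n \<Longrightarrow> u (Suc n) \<le> u n / 2 + w n"
    and w: "summable w" "\<And>n. 0 \<le> w n"
  shows "summable u"
proof -
  define v where "v n = u (n + N)" for n
  define W where "W = (\<Sum>n. w (n + N))"
  have partial_w: "(\<Sum>i<m. w (i + N)) \<le> W" for m
    unfolding W_def using w by (intro sum_le_suminf) (auto simp: summable_iff_shift)
  have "(\<Sum>i<m. v i) \<le> 2 * (v 0 + W)" for m
  proof (cases m)
    case 0
    then show ?thesis using partial_w[of 0] u_nonneg[of N] by (simp add: v_def)
  next
    case (Suc k)
    have "(\<Sum>i<Suc k. v i) = v 0 + (\<Sum>i<k. v (Suc i))"
      by (rule sum.lessThan_Suc_shift)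
    also have "\<dots> \<le> v 0 + (\<Sum>i<k. v i / 2 + w (i + N))"
      using rec by (intro add_left_mono sum_mono) (simp add: v_def)
    also have "\<dots> = v 0 + (\<Sum>i<k. v i) / 2 + (\<Sum>i<k. w (i + N))"
      by (simp add: sum.distrib sum_divide_distrib)
    also have "\<dots> \<le> v 0 + (\<Sum>i<Suc k. v i) / 2 + W"
    proof -
      have "0 \<le> v k" by (simp add: v_def u_nonneg)
      then show ?thesis using partial_w[of k] by (simp add: add_divide_distrib)
    qed
    finally show ?thesis by (simp only: Suc) (simp add: field_simps del: sum.lessThan_Suc)
  qed
  then have "summable v"
    by (intro summableI_nonneg_bounded[of v]) (simp_all add: v_def u_nonneg)
  then show ?thesis unfolding v_def by (simp add: summable_iff_shift)
qed

lemma summable_norm_power_L_recursion: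
  fixes a \<theta> :: "nat \<Rightarrow> complex^'d"
  assumes \<alpha>: "0 < \<alpha>" "\<alpha> < 1" and T: "0 < T"
    and \<theta>: "summable (\<lambda>n. norm (\<theta> n) * T ^ n)"
    and rec: "\<And>n. a (Suc n) = (1 / Lfactor \<alpha> (Suc n)) *\<^sub>R (A *v a n + \<theta> n)"
  shows "summable (\<lambda>n. norm (a n) * T ^ n)"
proof -
  obtain K where K: "\<And>v. norm (A *v v) \<le> norm v * K" "0 < K"
    using bounded_linear.pos_bounded[OF matrix_vector_mul_bounded_linear[of A]] by blast
  obtain N where N: "\<And>n. N \<le> n \<Longrightarrow> 2 * K * T \<le> Lfactor \<alpha> (Suc n)"
    using Lfactor_Suc_at_top[OF \<alpha>] unfolding filterlim_at_top eventually_sequentially by blast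
  show ?thesis
  proof (rule summable_halving_recursion[where N = N])
    fix n assume "N \<le> n"
    define L where "L = Lfactor \<alpha> (Suc n)"
    have L: "0 < L" "1 \<le> L" "2 * K * T \<le> L"
      unfolding L_def using Lfactor_pos[OF \<alpha>(2)] Lfactor_ge_1[of \<alpha>] \<alpha> N[OF \<open>N \<le> n\<close>] by auto
    have "norm (a (Suc n)) * T ^ Suc n = T / L * (norm (A *v a n + \<theta> n) * T ^ n)"
      using L T by (simp add: rec L_def[symmetric])
    also have "\<dots> \<le> T / L * ((K * norm (a n) + norm (\<theta> n)) * T ^ n)"
      using K(1)[of "a n"] L T
      by (intro mult_left_mono mult_right_mono order_trans[OF norm_triangle_ineq]) (auto simp: mult.commute)
    also have "\<dots> = K * T / L * (norm (a n) * T ^ n) + T / L * (norm (\<theta> n) * T ^ n)"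
      by (simp add: algebra_simps)
    also have "\<dots> \<le> 1 / 2 * (norm (a n) * T ^ n) + T * (norm (\<theta> n) * T ^ n)"
      using L T K by (intro add_mono mult_right_mono) (auto simp: field_simps)
    finally show "norm (a (Suc n)) * T ^ Suc n \<le> norm (a n) * T ^ n / 2 + T * (norm (\<theta> n) * T ^ n)"
      by simp
  qed (use \<theta> T in \<open>auto intro: summable_mult\<close>)
qed

lemma summable_Lfactor_norm_L_recursion:
  fixes a \<theta> :: "nat \<Rightarrow> complex^'d"
  assumes "\<alpha> < 1" "0 < T"
    and a: "summable (\<lambda>n. norm (a n) * T ^ n)" and \<theta>: "summable (\<lambda>n. norm (\<theta> n) * T ^ n)"
    and rec: "\<And>n. a (Suc n) = (1 / Lfactor \<alpha> (Suc n)) *\<^sub>R (A *v a n + \<theta> n)"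
  shows "summable (\<lambda>n. Lfactor \<alpha> (Suc n) * norm (a (Suc n)) * T ^ n)"
proof -
  obtain K where K: "\<And>v. norm (A *v v) \<le> norm v * K"
    using bounded_linear.bounded[OF matrix_vector_mul_bounded_linear[of A]] by blast
  show ?thesis
  proof (rule summable_comparison_test'[OF summable_add[OF summable_mult[OF a, of K] \<theta>]])
    fix n
    have "Lfactor \<alpha> (Suc n) * norm (a (Suc n)) = norm (A *v a n + \<theta> n)"
      using Lfactor_pos[OF assms(1), of "Suc n"] by (simp add: rec)
    also have "\<dots> \<le> K * norm (a n) + norm (\<theta> n)"
      using K[of "a n"] by (intro order_trans[OF norm_triangle_ineq]) (auto simp: mult.commute)
    finally have "Lfactor \<alpha> (Suc n) * norm (a (Suc n)) * T ^ n \<le> (K * norm (a n) + norm (\<theta> n)) * T ^ n"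
      using assms(2) by (intro mult_right_mono) auto
    moreover have "0 \<le> Lfactor \<alpha> (Suc n) * norm (a (Suc n)) * T ^ n"
      using assms(2) Lfactor_pos[OF assms(1), of "Suc n"] by simp
    ultimately show "norm (Lfactor \<alpha> (Suc n) * norm (a (Suc n)) * T ^ n)
                       \<le> K * (norm (a n) * T ^ n) + norm (\<theta> n) * T ^ n"
      by (simp add: algebra_simps)
  qed
qed

lemma solution_coeff_power_series:
  fixes A :: "complex^'d^'d"
  assumes \<alpha>: "0 < \<alpha>" "\<alpha> < 1" and t: "\<bar>t\<bar> \<le> T"
    and a: "summable (\<lambda>n. norm (solution_coeff \<alpha> A x0 \<theta> n) * T ^ n)"
  shows "Emat \<alpha> (t *\<^sub>R A) *v x0
           + (\<Sum>n. \<Sum>k<n. (forcing_coeff \<alpha> n k * t ^ n) *\<^sub>R (mpow A k *v \<theta> (n - k - 1)))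
         = (\<Sum>n. t ^ n *\<^sub>R solution_coeff \<alpha> A x0 \<theta> n)"
proof -
  have "(\<lambda>n. t ^ n *\<^sub>R solution_coeff \<alpha> A x0 \<theta> n) sums (\<Sum>n. t ^ n *\<^sub>R solution_coeff \<alpha> A x0 \<theta> n)"
    using summable_power_scaleR[OF a t] by (rule summable_sums)
  from sums_diff[OF this Emat_scaleR_mult_vector_sums[OF \<alpha>, of t A x0]]
  have "(\<lambda>n. \<Sum>k<n. (forcing_coeff \<alpha> n k * t ^ n) *\<^sub>R (mpow A k *v \<theta> (n - k - 1)))
          sums ((\<Sum>n. t ^ n *\<^sub>R solution_coeff \<alpha> A x0 \<theta> n) - Emat \<alpha> (t *\<^sub>R A) *v x0)"
    by (simp add: solution_coeff_def scaleR_add_right scaleR_sum_right mult.commute)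
  then show ?thesis by (simp add: sums_iff)
qed

lemma suminf_power_matrix_vector_add:
  fixes a \<theta> :: "nat \<Rightarrow> complex^'d"
  assumes "summable (\<lambda>n. norm (a n) * T ^ n)" "summable (\<lambda>n. norm (\<theta> n) * T ^ n)" "\<bar>t\<bar> \<le> T"
  shows "(\<Sum>n. t ^ n *\<^sub>R (A *v a n + \<theta> n)) = A *v (\<Sum>n. t ^ n *\<^sub>R a n) + (\<Sum>n. t ^ n *\<^sub>R \<theta> n)"
proof -
  have "(\<lambda>n. A *v (t ^ n *\<^sub>R a n)) sums (A *v (\<Sum>n. t ^ n *\<^sub>R a n))"
    by (intro bounded_linear.sums[OF matrix_vector_mul_bounded_linear] summable_sums
        summable_power_scaleR[OF assms(1,3)])
  from sums_add[OF this summable_sums[OF summable_power_scaleR[OF assms(2,3)]]]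
  show ?thesis by (simp add: sums_iff matrix_vector_mult_scaleR_right scaleR_add_right)
qed

theorem mainTheorem14:
  fixes \<alpha> T :: real and A :: "complex ^'d ^'d" and x0 :: "complex ^'d"
    and \<theta> :: "nat \<Rightarrow> complex ^'d" and x :: "real \<Rightarrow> complex ^'d"
  assumes "0 < \<alpha>" "\<alpha> < 1" "0 < T"
    and "summable (\<lambda>n. norm (\<theta> n) * T ^ n)"
    and "x = (\<lambda>t. Emat \<alpha> (t *\<^sub>R A) *v x0
           + (\<Sum>n. (\<Sum>k<n. ((\<Prod>j=n-k..n. Gamma (real j - \<alpha> + 1))
                  / (Gamma (2 - \<alpha>) ^ (k + 1) * (\<Prod>j=n-k..n. Gamma (real j + 1))) * t ^ n)
                  *\<^sub>R (mpow A k *v \<theta> (n - k - 1)))))"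
  shows "x 0 = x0 \<and>
    (\<forall>t\<in>{0..T}. LD \<alpha> x t = A *v x t + (\<Sum>n. (t ^ n) *\<^sub>R \<theta> n))"
proof -
  define a where "a = solution_coeff \<alpha> A x0 \<theta>"
  have rec: "a (Suc n) = (1 / Lfactor \<alpha> (Suc n)) *\<^sub>R (A *v a n + \<theta> n)" for n
    unfolding a_def by (rule solution_coeff_Suc[OF assms(2)])
  have a_summable: "summable (\<lambda>n. norm (a n) * T ^ n)"
    by (rule summable_norm_power_L_recursion[OF assms(1-4) rec])
  have x_series: "x t = (\<Sum>n. t ^ n *\<^sub>R a n)" if "\<bar>t\<bar> \<le> T" for t
    using solution_coeff_power_series[OF assms(1,2) that a_summable[unfolded a_def]]
    unfolding assms(5) forcing_coeff_def a_def by simp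
  have LD_x: "LD \<alpha> x t = (\<Sum>n. t ^ n *\<^sub>R (A *v a n + \<theta> n))" if "t \<in> {0..T}" for t
    using LD_power_series[OF assms(1,2) that assms(3)
        summable_Lfactor_norm_L_recursion[OF assms(2,3) a_summable assms(4) rec]] x_series
    by (simp add: rec Lfactor_pos[OF assms(2)] less_imp_neq[symmetric])
  have "LD \<alpha> x t = A *v x t + (\<Sum>n. t ^ n *\<^sub>R \<theta> n)" if "t \<in> {0..T}" for t
    using LD_x[OF that] x_series[of t] that suminf_power_matrix_vector_add[OF a_summable assms(4), of t A]
    by simp
  moreover have "x 0 = x0"
    using x_series[of 0] assms(3) by (simp add: power_series_scaleR_0 a_def solution_coeff_0)
  ultimately show ?thesis by blast
qed

end
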